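(* Let $\{c_n\}_{n\ge1}$ be a real sequence with $\sum_{n=1}^\infty |c_n|<+\infty$ and $\sum_{n=N}^{\infty}(c_n)^2>0$ for every $N\ge1$. Let $f(x):=\sum_{n=1}^\infty c_n\varphi^{(n)}(x)$ and $f_N(x):=\sum_{n=1}^{N-1}c_n\varphi^{(n)}(x)$ for $x\in[0,1]$. If $$\lim_{N\to\infty}\frac{(c_N)^2}{\sum_{n=N}^\infty (c_n)^2}=0,$$ then for every $u\in\mathbb{R}$, $$\lim_{N\to\infty}P\left(\left\{x\in[0,1]:\frac{f(x)-f_N(x)-\frac12\sum_{n=N}^\infty c_n}{\sqrt{\frac1{12}\sum_{n=N}^\infty (c_n)^2}}\le u\right\}\right)=\int_{-\infty}^u\frac{1}{\sqrt{2\pi}}e^{-t^2/2}\,dt.$$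
   Context: The tent map on $[0,1]$ is $\varphi(x)=2x$ for $x\in[0,1/2]$ and $\varphi(x)=2(1-x)$ for $x\in[1/2,1]$; it is extended to $\mathbb{R}$ by $\varphi(x):=\varphi(x-[x])$, and $\varphi^{(n)}$ denotes the $n$-fold iterate of $\varphi$, so that $\varphi^{(n)}(x)=\varphi(2^{n-1}x)$. $P$ denotes Lebesgue measure on $[0,1]$. *)

theory Defs
  imports "HOL-Analysis.Analysis"
begin

definition tent :: "real \<Rightarrow> real" where
  "tent x = (let y = x - of_int \<lfloor>x\<rfloor> in if y \<le> 1/2 then 2 * y else 2 * (1 - y))"

definition tent_iter :: "nat \<Rightarrow> real \<Rightarrow> real" where
  "tent_iter n = (tent ^^ n)"

end

theory Submission
  imports Defs "HOL-Probability.Probability"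
begin

text \<open>With \<open>rho = 1 - 2 tent\<close> and \<open>tent_iter (n + 1) x = tent (2\<^sup>n x)\<close>, the normalised statistic
  equals \<open>sqrt 3 \<Sum>\<^sub>k b\<^sub>k rho (2\<^sup>k y)\<close> with \<open>y = 2\<^sup>N\<^sup>-\<^sup>1 x\<close>, \<open>\<Sum> b\<^sub>k\<^sup>2 = 1\<close>, and \<open>sup |b\<^sub>k| \<rightarrow> 0\<close> by the
  ratio hypothesis. Since the transfer operator of the doubling map annihilates \<open>rho\<close>, every
  Riesz product \<open>\<Prod>\<^sub>k (1 + i \<mu>\<^sub>k rho (2\<^sup>k z))\<close> has integral exactly \<open>1\<close>. Writing
  \<open>exp (i x) = (1 + i x) u(x)\<close> with \<open>|u| \<le> 1\<close> and \<open>u(x) = exp (- x\<^sup>2/2) + O(|x|\<^sup>3)\<close>, the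
  characteristic function of the statistic is the integral of a Riesz product times \<open>\<Prod> u(x\<^sub>k)\<close>.
  It differs from \<open>exp (- t\<^sup>2/2)\<close> by \<open>O(sup |b\<^sub>k|)\<close> plus the \<open>L\<^sup>2\<close> distance of the random variance
  \<open>3 \<Sum> b\<^sub>k\<^sup>2 rho (2\<^sup>k z)\<^sup>2\<close> from \<open>1\<close>, which is small because \<open>rho\<^sup>2 - 1/3\<close> is Lipschitz with mean
  zero, so that its correlations under doubling decay geometrically. Levy's continuity theorem
  turns convergence of characteristic functions into convergence of distribution functions.\<close>

section \<open>The tent map\<close>

lemma tent_eq_arccos_cos: "tent x = arccos (cos (2 * pi * x)) / pi"
proof -
  define y where "y = x - of_int \<lfloor>x\<rfloor>"
  have y: "0 \<le> y" "y < 1" unfolding y_def by linarith+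
  have cos_y: "cos (2 * pi * x) = cos (2 * pi * y)"
  proof -
    have "2 * pi * x = 2 * pi * y + 2 * pi * of_int \<lfloor>x\<rfloor>" unfolding y_def by (simp add: algebra_simps)
    then show ?thesis by (simp add: cos_add)
  qed
  show ?thesis
  proof (cases "y \<le> 1/2")
    case True
    have "arccos (cos (2 * pi * y)) = 2 * pi * y"
      using True y by (intro arccos_cos) auto
    then show ?thesis using True unfolding tent_def Let_def y_def[symmetric] cos_y by simp
  next
    case False
    have "cos (2 * pi * y) = cos (2 * pi * (1 - y))"
      by (simp add: algebra_simps cos_diff)
    moreover have "arccos (cos (2 * pi * (1 - y))) = 2 * pi * (1 - y)"
      using False y by (intro arccos_cos) auto
    ultimately show ?thesis using False unfolding tent_def Let_def y_def[symmetric] cos_y by simp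
  qed
qed

lemma continuous_on_tent: "continuous_on A tent"
proof -
  have "continuous_on A (\<lambda>x. arccos (cos (2 * pi * x)) / pi)"
    by (intro continuous_intros continuous_on_compose2[OF continuous_on_arccos]) auto
  then show ?thesis by (simp add: tent_eq_arccos_cos[abs_def])
qed

lemma tent_add_1: "tent (x + 1) = tent x"
proof -
  have "cos (2 * pi * (x + 1)) = cos (2 * pi * x)"
    by (simp add: distrib_left cos_add)
  then show ?thesis by (simp add: tent_eq_arccos_cos)
qed

lemma tent_tent: "tent (tent x) = tent (2 * x)"
proof -
  have "cos (2 * pi * tent x) = cos (2 * arccos (cos (2 * pi * x)))"
    by (simp add: tent_eq_arccos_cos)
  also have "\<dots> = cos (2 * pi * (2 * x))"
    using cos_double_cos[of "2 * pi * x"] by (simp add: cos_double_cos algebra_simps)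
  finally show ?thesis by (simp add: tent_eq_arccos_cos)
qed

lemma tent_iter_Suc: "tent_iter (Suc n) x = tent (2 ^ n * x)"
proof (induction n)
  case 0
  then show ?case by (simp add: tent_iter_def)
next
  case (Suc n)
  have "tent_iter (Suc (Suc n)) x = tent (tent_iter (Suc n) x)"
    by (simp add: tent_iter_def)
  also have "\<dots> = tent (2 * (2 ^ n * x))" using Suc by (simp add: tent_tent)
  finally show ?case by (simp add: algebra_simps)
qed

lemma tent_unit_interval: "x \<in> {0..1} \<Longrightarrow> tent x = (if x \<le> 1/2 then 2 * x else 2 - 2 * x)"
proof (cases "x = 1")
  case False
  assume "x \<in> {0..1}"
  with False have "\<lfloor>x\<rfloor> = 0" by (intro floor_unique) auto
  then show ?thesis by (simp add: tent_def)
qed (simp add: tent_def)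

lemma tent_bounds: "0 \<le> tent x" "tent x \<le> 1"
  unfolding tent_def Let_def by (auto simp: algebra_simps, linarith+)

section \<open>Integrals under the doubling map\<close>

definition unit_periodic :: "(real \<Rightarrow> 'a) \<Rightarrow> bool" where
  "unit_periodic G \<longleftrightarrow> (\<forall>x. G (x + 1) = G x)"

lemma unit_periodic_add_of_nat: "unit_periodic G \<Longrightarrow> G (x + of_nat m) = G x"
proof (induction m arbitrary: x)
  case (Suc m)
  have "G (x + of_nat (Suc m)) = G ((x + of_nat m) + 1)" by (simp add: algebra_simps)
  also have "\<dots> = G (x + of_nat m)" using Suc.prems by (simp add: unit_periodic_def)
  finally show ?case using Suc by simp
qed simp

lemma unit_periodic_scale_pow2:
  assumes "unit_periodic G"
  shows "unit_periodic (\<lambda>w. G (2 ^ n * w))"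
proof -
  have "G (2 ^ n * x + of_nat (2 ^ n)) = G (2 ^ n * x)" for x
    using assms by (rule unit_periodic_add_of_nat)
  then show ?thesis unfolding unit_periodic_def by (simp add: algebra_simps)
qed

lemma has_integral_halves:
  fixes f g P :: "real \<Rightarrow> 'a::banach"
  assumes f: "continuous_on {0..1} f" and g: "continuous_on {0..1} g"
    and P_left: "\<And>z. z \<in> {0..1/2} \<Longrightarrow> P z = f (2 * z)"
    and P_right: "\<And>z. z \<in> {1/2..1} \<Longrightarrow> P z = g (2 * z - 1)"
  shows "(P has_integral ((1/2) *\<^sub>R (integral {0..1} f + integral {0..1} g))) {0..1}"
proof -
  have "(f has_integral integral {0..1} f) (cbox 0 1)"
    using integrable_continuous_interval[OF f] by (simp add: has_integral_integral)
  from has_integral_affinity'[OF this, of 2 0]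
  have "((\<lambda>x. f (2 * x)) has_integral ((1/2) *\<^sub>R integral {0..1} f)) {0..1/2}"
    by simp
  then have left: "(P has_integral ((1/2) *\<^sub>R integral {0..1} f)) {0..1/2}"
    by (rule has_integral_eq[rotated]) (simp add: P_left)
  have "(g has_integral integral {0..1} g) (cbox 0 1)"
    using integrable_continuous_interval[OF g] by (simp add: has_integral_integral)
  from has_integral_affinity'[OF this, of 2 "-1"]
  have "((\<lambda>x. g (2 * x - 1)) has_integral ((1/2) *\<^sub>R integral {0..1} g)) {1/2..1}"
    by simp
  then have right: "(P has_integral ((1/2) *\<^sub>R integral {0..1} g)) {1/2..1}"
    by (rule has_integral_eq[rotated]) (simp add: P_right)
  have "(P has_integral ((1/2) *\<^sub>R integral {0..1} f + (1/2) *\<^sub>R integral {0..1} g)) {0..1}"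
    by (rule has_integral_combine[OF _ _ left right]) auto
  then show ?thesis by (simp add: scaleR_add_right)
qed

text \<open>The transfer (Perron--Frobenius) operator of the doubling map \<open>z \<mapsto> 2z mod 1\<close>
  averages \<open>h\<close> over the two preimages \<open>w/2\<close> and \<open>(w+1)/2\<close>.\<close>
lemma integral_doubling_transfer:
  fixes h G :: "real \<Rightarrow> 'a::{real_normed_algebra, banach}"
  assumes h: "continuous_on {0..1} h" and G: "continuous_on UNIV G" "unit_periodic G"
  shows "integral {0..1} (\<lambda>z. h z * G (2 * z))
       = integral {0..1} (\<lambda>w. ((1/2) *\<^sub>R (h (w/2) + h ((w+1)/2))) * G w)"
proof -
  have h1: "continuous_on {0..1} (\<lambda>w. h (w/2))"
    by (rule continuous_on_compose2[OF h]) (auto intro!: continuous_intros)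
  have h2: "continuous_on {0..1} (\<lambda>w. h ((w+1)/2))"
    by (rule continuous_on_compose2[OF h]) (auto intro!: continuous_intros)
  have G01: "continuous_on {0..1} G" using G(1) by (rule continuous_on_subset) auto
  have f: "continuous_on {0..1} (\<lambda>w. h (w/2) * G w)" by (intro continuous_intros h1 G01)
  have g: "continuous_on {0..1} (\<lambda>w. h ((w+1)/2) * G w)" by (intro continuous_intros h2 G01)
  have "((\<lambda>z. h z * G (2 * z)) has_integral
      ((1/2) *\<^sub>R (integral {0..1} (\<lambda>w. h (w/2) * G w) + integral {0..1} (\<lambda>w. h ((w+1)/2) * G w)))) {0..1}"
  proof (rule has_integral_halves[OF f g])
    fix z :: real
    have "G (2 * z) = G (2 * z - 1)" using G(2) unfolding unit_periodic_def by (metis diff_add_cancel)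
    then show "h z * G (2 * z) = h ((2 * z - 1 + 1) / 2) * G (2 * z - 1)" by simp
  qed simp
  moreover have "integral {0..1} (\<lambda>w. ((1/2) *\<^sub>R (h (w/2) + h ((w+1)/2))) * G w)
     = (1/2) *\<^sub>R (integral {0..1} (\<lambda>w. h (w/2) * G w) + integral {0..1} (\<lambda>w. h ((w+1)/2) * G w))"
    using integrable_continuous_interval[OF f] integrable_continuous_interval[OF g]
    by (simp add: algebra_simps integral_add)
  ultimately show ?thesis by (simp add: integral_unique)
qed

lemma integral_doubling_pow_invariant:
  fixes G :: "real \<Rightarrow> 'a::{real_normed_algebra_1, banach}"
  assumes "continuous_on UNIV G" "unit_periodic G"
  shows "integral {0..1} (\<lambda>z. G (2 ^ n * z)) = integral {0..1} G"
  using assms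
proof (induction n arbitrary: G)
  case (Suc n)
  define G2 where "G2 = (\<lambda>w. G (2 * w))"
  have G2: "continuous_on UNIV G2" "unit_periodic G2"
    using Suc.prems unit_periodic_scale_pow2[OF Suc.prems(2), of 1] unfolding G2_def
    by (auto intro: continuous_on_compose2[OF Suc.prems(1)] continuous_intros)
  have "integral {0..1} (\<lambda>z. G (2 ^ Suc n * z)) = integral {0..1} (\<lambda>z. G2 (2 ^ n * z))"
    by (simp add: G2_def mult.assoc)
  also have "\<dots> = integral {0..1} (\<lambda>z. 1 * G (2 * z))" using Suc.IH[OF G2] by (simp add: G2_def)
  also have "\<dots> = integral {0..1} (\<lambda>w. ((1/2) *\<^sub>R (1 + 1)) * G w)"
    using integral_doubling_transfer[of "\<lambda>z. 1" G] Suc.prems by simp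
  also have "(1/2::real) *\<^sub>R (1 + 1 :: 'a) = 1" by (subst scaleR_2[symmetric]) simp
  finally show ?case by simp
qed simp

lemma abs_integral_lipschitz_times_mean_zero_le:
  fixes h G :: "real \<Rightarrow> real"
  assumes h: "continuous_on {0..1} h"
    and "\<And>x y. x \<in> {0..1} \<Longrightarrow> y \<in> {0..1} \<Longrightarrow> \<bar>h x - h y\<bar> \<le> L * \<bar>x - y\<bar>" "0 \<le> L"
    and G: "continuous_on {0..1} G" "integral {0..1} G = 0" "\<And>x. \<bar>G x\<bar> \<le> B"
  shows "\<bar>integral {0..1} (\<lambda>v. h v * G v)\<bar> \<le> L * B"
proof -
  have int: "(\<lambda>v. (h v - h 0) * G v) integrable_on {0..1}" "(\<lambda>v. h 0 * G v) integrable_on {0..1}"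
    by (intro integrable_continuous_interval continuous_intros h G(1))+
  have "integral {0..1} (\<lambda>v. h v * G v) = integral {0..1} (\<lambda>v. (h v - h 0) * G v + h 0 * G v)"
    by (simp add: algebra_simps)
  also have "\<dots> = integral {0..1} (\<lambda>v. (h v - h 0) * G v)"
    using int G(2) by (simp add: integral_add integral_mult[symmetric])
  finally have eq: "integral {0..1} (\<lambda>v. h v * G v) = integral {0..1} (\<lambda>v. (h v - h 0) * G v)" .
  have "norm ((h v - h 0) * G v) \<le> L * B" if v: "v \<in> {0..1}" for v
  proof -
    have "\<bar>h v - h 0\<bar> \<le> L" using assms(2)[of v 0] v assms(3) by (auto intro: order_trans mult_left_le)
    then show ?thesis
      unfolding real_norm_def abs_mult by (intro mult_mono G(3)) (auto simp: order_trans[OF abs_ge_zero G(3)])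
  qed
  then have "norm (integral {0..1} (\<lambda>v. (h v - h 0) * G v)) \<le> integral {0..1} (\<lambda>v::real. L * B)"
    by (intro integral_norm_bound_integral[OF int(1)]) (simp_all add: integrable_continuous_interval)
  then show ?thesis using eq by simp
qed

text \<open>Decay of correlations: each doubling halves the Lipschitz constant of the transferred \<open>h\<close>,
  and against a mean-zero \<open>G\<close> only the oscillation of \<open>h\<close> counts.\<close>
lemma correlation_decay:
  fixes h G :: "real \<Rightarrow> real"
  assumes "continuous_on {0..1} h"
    and "\<And>x y. x \<in> {0..1} \<Longrightarrow> y \<in> {0..1} \<Longrightarrow> \<bar>h x - h y\<bar> \<le> L * \<bar>x - y\<bar>"
    and "0 \<le> L"
    and G: "continuous_on UNIV G" "unit_periodic G" "integral {0..1} G = 0" "\<And>x. \<bar>G x\<bar> \<le> B"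
  shows "\<bar>integral {0..1} (\<lambda>v. h v * G (2 ^ p * v))\<bar> \<le> L * B / 2 ^ p"
  using assms(1-3)
proof (induction p arbitrary: h L)
  case 0
  then show ?case
    using abs_integral_lipschitz_times_mean_zero_le[of h L G B] G(1,3,4)
    by (auto intro: continuous_on_subset)
next
  case (Suc p)
  define G2 where "G2 = (\<lambda>w. G (2 ^ p * w))"
  have G2: "continuous_on UNIV G2" "unit_periodic G2" unfolding G2_def
    by (auto intro!: continuous_on_compose2[OF G(1)] continuous_intros unit_periodic_scale_pow2 G(2))
  define h' where "h' = (\<lambda>w. (1/2) *\<^sub>R (h (w/2) + h ((w+1)/2)))"
  have "continuous_on {0..1} h'" unfolding h'_def
    by (intro continuous_intros continuous_on_compose2[OF Suc.prems(1)]) auto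
  moreover have "\<bar>h' x - h' y\<bar> \<le> (L/2) * \<bar>x - y\<bar>" if "x \<in> {0..1}" "y \<in> {0..1}" for x y
  proof -
    define d where "d = (L/2) * \<bar>x - y\<bar>"
    have "L * \<bar>x/2 - y/2\<bar> = d" "L * \<bar>(x+1)/2 - (y+1)/2\<bar> = d"
      by (simp_all add: d_def abs_divide[symmetric] diff_divide_distrib[symmetric])
    then have "\<bar>h (x/2) - h (y/2)\<bar> \<le> d" "\<bar>h ((x+1)/2) - h ((y+1)/2)\<bar> \<le> d"
      using that Suc.prems(2)[of "x/2" "y/2"] Suc.prems(2)[of "(x+1)/2" "(y+1)/2"] by auto
    moreover have "h' x - h' y = ((h (x/2) - h (y/2)) + (h ((x+1)/2) - h ((y+1)/2))) / 2"
      unfolding h'_def by (simp add: algebra_simps)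
    ultimately have "\<bar>h' x - h' y\<bar> \<le> d" by (auto simp: abs_le_iff)
    then show ?thesis by (simp add: d_def)
  qed
  ultimately have "\<bar>integral {0..1} (\<lambda>w. h' w * G (2 ^ p * w))\<bar> \<le> (L/2) * B / 2 ^ p"
    using Suc.prems(3) by (intro Suc.IH) auto
  moreover have "integral {0..1} (\<lambda>v. h v * G (2 ^ Suc p * v)) = integral {0..1} (\<lambda>w. h' w * G2 w)"
    using integral_doubling_transfer[OF Suc.prems(1) G2]
    by (simp add: G2_def h'_def mult.assoc mult.left_commute)
  ultimately show ?case by (simp add: G2_def)
qed

section \<open>The centred tent function\<close>

text \<open>On \<open>[0,1]\<close>, \<open>rho\<close> is uniformly distributed on \<open>[-1,1]\<close>; hence \<open>rho\<close> has mean zero and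
  \<open>rho\<^sup>2\<close> has mean \<open>1/3\<close>, which \<open>rho_sq_centered\<close> subtracts.\<close>
definition rho :: "real \<Rightarrow> real" where
  "rho y = 1 - 2 * tent y"

definition rho_sq_centered :: "real \<Rightarrow> real" where
  "rho_sq_centered y = 3 * (rho y)\<^sup>2 - 1"

lemma continuous_on_rho: "continuous_on A rho"
  unfolding rho_def by (intro continuous_intros continuous_on_tent)

lemma continuous_on_rho_pow2: "continuous_on A (\<lambda>z. rho (2 ^ k * z))"
  by (intro continuous_on_compose2[OF continuous_on_rho] continuous_intros) auto

lemma abs_rho_le_1: "\<bar>rho y\<bar> \<le> 1"
  using tent_bounds[of y] unfolding rho_def by auto

lemma unit_periodic_rho: "unit_periodic rho"
  unfolding unit_periodic_def rho_def by (simp add: tent_add_1)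

lemma rho_unit_interval: "x \<in> {0..1} \<Longrightarrow> rho x = (if x \<le> 1/2 then 1 - 4 * x else 4 * x - 3)"
  unfolding rho_def by (simp add: tent_unit_interval)

lemma rho_preimages_sum: "w \<in> {0..1} \<Longrightarrow> rho (w/2) + rho ((w+1)/2) = 0"
  by (subst rho_unit_interval, simp, subst rho_unit_interval, auto simp: field_simps)

lemma rho_lipschitz: "x \<in> {0..1} \<Longrightarrow> y \<in> {0..1} \<Longrightarrow> \<bar>rho x - rho y\<bar> \<le> 4 * \<bar>x - y\<bar>"
  by (auto simp add: rho_unit_interval abs_if)

lemma continuous_on_rho_sq_centered: "continuous_on A rho_sq_centered"
  unfolding rho_sq_centered_def by (intro continuous_intros continuous_on_rho)

lemma continuous_on_rho_sq_centered_pow2: "continuous_on A (\<lambda>z. rho_sq_centered (2 ^ k * z))"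
  by (intro continuous_on_compose2[OF continuous_on_rho_sq_centered] continuous_intros) auto

lemma unit_periodic_rho_sq_centered: "unit_periodic rho_sq_centered"
  using unit_periodic_rho unfolding unit_periodic_def rho_sq_centered_def by simp

lemma abs_rho_sq_centered_le_2: "\<bar>rho_sq_centered y\<bar> \<le> 2"
proof -
  have "(rho y)\<^sup>2 \<le> 1" using abs_rho_le_1[of y] by (simp add: abs_square_le_1)
  moreover have "0 \<le> (rho y)\<^sup>2" by simp
  ultimately show ?thesis unfolding rho_sq_centered_def abs_le_iff by linarith
qed

lemma rho_sq_centered_lipschitz:
  assumes "x \<in> {0..1}" "y \<in> {0..1}"
  shows "\<bar>rho_sq_centered x - rho_sq_centered y\<bar> \<le> 24 * \<bar>x - y\<bar>"
proof -
  have "\<bar>rho_sq_centered x - rho_sq_centered y\<bar> = 3 * (\<bar>rho x - rho y\<bar> * \<bar>rho x + rho y\<bar>)"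
  proof -
    have "rho_sq_centered x - rho_sq_centered y = 3 * ((rho x - rho y) * (rho x + rho y))"
      unfolding rho_sq_centered_def by (simp add: power2_eq_square algebra_simps)
    then show ?thesis by (simp add: abs_mult)
  qed
  also have "\<dots> \<le> 3 * (4 * \<bar>x - y\<bar> * 2)"
    using rho_lipschitz[OF assms] abs_rho_le_1[of x] abs_rho_le_1[of y]
    by (intro mult_left_mono mult_mono) auto
  finally show ?thesis by simp
qed

lemma integral_rho_sq_centered: "integral {0..1} rho_sq_centered = 0"
proof -
  define f where "f = (\<lambda>w::real. 3 * (1 - 2 * w)\<^sup>2 - 1)"
  have "(f has_integral ((\<lambda>w. 2 * w - 6 * w\<^sup>2 + 4 * w ^ 3) 1 - (\<lambda>w. 2 * w - 6 * w\<^sup>2 + 4 * w ^ 3) 0)) {0..1}"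
    unfolding f_def
    by (rule fundamental_theorem_of_calculus)
       (auto intro!: derivative_eq_intros
         simp: has_real_derivative_iff_has_vector_derivative[symmetric] power2_eq_square algebra_simps)
  then have f0: "integral {0..1} f = 0" by (simp add: integral_unique)
  have "continuous_on {0..1} f" unfolding f_def by (intro continuous_intros)
  from has_integral_halves[OF this this]
  have "(rho_sq_centered has_integral ((1/2) *\<^sub>R (integral {0..1} f + integral {0..1} f))) {0..1}"
    by (auto simp: rho_sq_centered_def rho_unit_interval f_def algebra_simps power2_eq_square)
  then show ?thesis by (simp add: f0 integral_unique)
qed

lemma integral_rho_sq_centered_pow2: "integral {0..1} (\<lambda>z. rho_sq_centered (2 ^ k * z)) = 0"
  using integral_doubling_pow_invariant[OF continuous_on_rho_sq_centered unit_periodic_rho_sq_centered]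
  by (simp add: integral_rho_sq_centered)

lemma correlation_rho_sq_centered_le:
  assumes "j \<le> k"
  shows "\<bar>integral {0..1} (\<lambda>z. rho_sq_centered (2 ^ j * z) * rho_sq_centered (2 ^ k * z))\<bar>
    \<le> 48 * (1/2) ^ (k - j)"
proof -
  define H where "H = (\<lambda>w. rho_sq_centered w * rho_sq_centered (2 ^ (k - j) * w))"
  have H: "continuous_on UNIV H" "unit_periodic H"
    using unit_periodic_rho_sq_centered unit_periodic_scale_pow2[OF unit_periodic_rho_sq_centered]
    unfolding H_def unit_periodic_def
    by (auto intro!: continuous_intros continuous_on_rho_sq_centered continuous_on_rho_sq_centered_pow2)
  have "(2::real) ^ k = 2 ^ (k - j) * 2 ^ j" using assms by (simp flip: power_add)
  then have "integral {0..1} (\<lambda>z. rho_sq_centered (2 ^ j * z) * rho_sq_centered (2 ^ k * z))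
      = integral {0..1} (\<lambda>z. H (2 ^ j * z))"
    unfolding H_def by (simp add: mult.assoc)
  also have "\<dots> = integral {0..1} H" by (rule integral_doubling_pow_invariant[OF H])
  also have "\<bar>\<dots>\<bar> \<le> 24 * 2 / 2 ^ (k - j)" unfolding H_def
    by (rule correlation_decay[OF _ rho_sq_centered_lipschitz _ continuous_on_rho_sq_centered
          unit_periodic_rho_sq_centered integral_rho_sq_centered abs_rho_sq_centered_le_2])
       (auto intro: continuous_on_rho_sq_centered)
  finally show ?thesis by (simp add: power_one_over)
qed

lemma sum_half_pow_le_2: "(\<Sum>i<n. (1/2::real) ^ i) \<le> 2"
  by (simp add: geometric_sum)

lemma sum_half_pow_dist_le_3: "(\<Sum>k<K. (1/2::real) ^ (max j k - min j k)) \<le> 3"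
proof -
  define f where "f k = (1/2::real) ^ (max j k - min j k)" for k
  have "(\<Sum>k<K. f k) \<le> (\<Sum>k\<in>{..j} \<union> {Suc j..<Suc j + K}. f k)"
    by (intro sum_mono2) (auto simp: f_def)
  also have "\<dots> = (\<Sum>k\<le>j. f k) + (\<Sum>k\<in>{Suc j..<Suc j + K}. f k)"
    by (rule sum.union_disjoint) auto
  also have "(\<Sum>k\<le>j. f k) = (\<Sum>i<Suc j. (1/2) ^ i)"
    unfolding lessThan_Suc_atMost f_def
    by (rule sum.reindex_bij_witness[where i="\<lambda>i. j - i" and j="\<lambda>k. j - k"]) auto
  also have "(\<Sum>k\<in>{Suc j..<Suc j + K}. f k) = (\<Sum>k\<in>{Suc j..<Suc j + K}. (1/2) ^ Suc (k - Suc j))"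
    by (intro sum.cong) (auto simp: f_def Suc_diff_Suc)
  also have "\<dots> = (1/2) * (\<Sum>i<K. (1/2) ^ i)"
    unfolding sum_distrib_left
    by (rule sum.reindex_bij_witness[where j="\<lambda>k. k - Suc j" and i="\<lambda>i. i + Suc j"]) auto
  finally show ?thesis
    using sum_half_pow_le_2[of "Suc j"] sum_half_pow_le_2[of K] by (simp add: f_def)
qed

lemma integral_square_weighted_rho_sq_centered_le:
  fixes b :: "nat \<Rightarrow> real"
  assumes b: "\<And>k. \<bar>b k\<bar> \<le> m"
  shows "integral {0..1} (\<lambda>z. (\<Sum>k<K. (b k)\<^sup>2 * rho_sq_centered (2 ^ k * z))\<^sup>2)
    \<le> 144 * m\<^sup>2 * (\<Sum>k<K. (b k)\<^sup>2)"
proof -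
  define C where "C j k = integral {0..1} (\<lambda>z. rho_sq_centered (2 ^ j * z) * rho_sq_centered (2 ^ k * z))"
    for j k
  have C: "C j k \<le> 48 * (1/2) ^ (max j k - min j k)" for j k
    using correlation_rho_sq_centered_le[of j k] correlation_rho_sq_centered_le[of k j]
    by (cases "j \<le> k") (auto simp: C_def mult.commute max_def min_def)
  have int: "(\<lambda>z. w * (rho_sq_centered (2 ^ j * z) * rho_sq_centered (2 ^ k * z))) integrable_on {0..1}"
    for w j k
    by (intro integrable_continuous_interval continuous_intros continuous_on_rho_sq_centered_pow2)
  have "(\<lambda>z. (\<Sum>k<K. (b k)\<^sup>2 * rho_sq_centered (2 ^ k * z))\<^sup>2)
      = (\<lambda>z. \<Sum>j<K. \<Sum>k<K. (b j)\<^sup>2 * (b k)\<^sup>2 * (rho_sq_centered (2 ^ j * z) * rho_sq_centered (2 ^ k * z)))"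
    unfolding power2_eq_square sum_product by (intro ext sum.cong) (auto simp: algebra_simps)
  then have "integral {0..1} (\<lambda>z. (\<Sum>k<K. (b k)\<^sup>2 * rho_sq_centered (2 ^ k * z))\<^sup>2)
      = (\<Sum>j<K. \<Sum>k<K. (b j)\<^sup>2 * (b k)\<^sup>2 * C j k)"
    using int by (simp add: C_def integral_sum integrable_sum)
  also have "\<dots> \<le> (\<Sum>j<K. \<Sum>k<K. (b j)\<^sup>2 * m\<^sup>2 * (48 * (1/2) ^ (max j k - min j k)))"
  proof (intro sum_mono)
    fix j k
    have "(b k)\<^sup>2 \<le> m\<^sup>2" using b[of k] b[of 0] by (simp add: abs_le_square_iff[symmetric])
    have "(b j)\<^sup>2 * (b k)\<^sup>2 * C j k \<le> (b j)\<^sup>2 * (b k)\<^sup>2 * (48 * (1/2) ^ (max j k - min j k))"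
      by (intro mult_left_mono C) auto
    also have "\<dots> \<le> (b j)\<^sup>2 * m\<^sup>2 * (48 * (1/2) ^ (max j k - min j k))"
      using \<open>(b k)\<^sup>2 \<le> m\<^sup>2\<close> by (intro mult_right_mono mult_left_mono) auto
    finally show "(b j)\<^sup>2 * (b k)\<^sup>2 * C j k \<le> (b j)\<^sup>2 * m\<^sup>2 * (48 * (1/2) ^ (max j k - min j k))" .
  qed
  also have "\<dots> = (\<Sum>j<K. 48 * (b j)\<^sup>2 * m\<^sup>2 * (\<Sum>k<K. (1/2) ^ (max j k - min j k)))"
    by (simp add: sum_distrib_left ac_simps)
  also have "\<dots> \<le> (\<Sum>j<K. 48 * (b j)\<^sup>2 * m\<^sup>2 * 3)"
    by (intro sum_mono mult_left_mono sum_half_pow_dist_le_3) auto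
  also have "\<dots> = 144 * m\<^sup>2 * (\<Sum>k<K. (b k)\<^sup>2)"
    by (simp add: sum_distrib_left algebra_simps)
  finally show ?thesis .
qed

text \<open>\<open>3 \<Sum> (b k)\<^sup>2 rho (2\<^sup>k z)\<^sup>2\<close> is the random variance of the lacunary sum; it
  concentrates around its mean \<open>\<Sum> (b k)\<^sup>2\<close>.\<close>
lemma integral_square_variance_sum_dev_le:
  fixes b :: "nat \<Rightarrow> real"
  assumes "\<And>k. \<bar>b k\<bar> \<le> m"
  shows "integral {0..1} (\<lambda>z. (3 * (\<Sum>k<K. (b k)\<^sup>2 * (rho (2 ^ k * z))\<^sup>2) - 1)\<^sup>2)
    \<le> 144 * m\<^sup>2 * (\<Sum>k<K. (b k)\<^sup>2) + (1 - (\<Sum>k<K. (b k)\<^sup>2))\<^sup>2"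
proof -
  define A where "A z = (\<Sum>k<K. (b k)\<^sup>2 * rho_sq_centered (2 ^ k * z))" for z
  define \<tau> where "\<tau> = 1 - (\<Sum>k<K. (b k)\<^sup>2)"
  have dev: "3 * (\<Sum>k<K. (b k)\<^sup>2 * (rho (2 ^ k * z))\<^sup>2) - 1 = A z - \<tau>" for z
    by (simp add: A_def \<tau>_def rho_sq_centered_def algebra_simps sum_subtractf sum_distrib_left)
  have "integral {0..1} (\<lambda>z. (3 * (\<Sum>k<K. (b k)\<^sup>2 * (rho (2 ^ k * z))\<^sup>2) - 1)\<^sup>2)
      = integral {0..1} (\<lambda>z. (A z)\<^sup>2 - 2 * \<tau> * A z + \<tau>\<^sup>2)"
    unfolding dev by (simp add: power2_diff algebra_simps)
  also have "\<dots> = integral {0..1} (\<lambda>z. (A z)\<^sup>2) - 2 * \<tau> * integral {0..1} A + \<tau>\<^sup>2"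
  proof -
    have "continuous_on {0..1} A"
      unfolding A_def by (intro continuous_intros continuous_on_rho_sq_centered_pow2)
    then have "(\<lambda>z. (A z)\<^sup>2) integrable_on {0..1}" "(\<lambda>z. 2 * \<tau> * A z) integrable_on {0..1}"
      by (auto intro!: integrable_continuous_interval continuous_intros)
    then show ?thesis by (simp add: integral_add integral_diff integrable_diff integrable_const_ivl)
  qed
  also have "integral {0..1} A = 0"
    unfolding A_def
    by (subst integral_sum) (auto intro!: integrable_continuous_interval continuous_intros
        continuous_on_rho_sq_centered_pow2 simp: integral_rho_sq_centered_pow2)
  finally show ?thesis
    using integral_square_weighted_rho_sq_centered_le[OF assms, where K=K] by (simp add: A_def \<tau>_def)
qed

section \<open>Riesz products\<close>

lemma norm_one_plus_i_times: "norm (1 + \<i> * complex_of_real x) = sqrt (1 + x\<^sup>2)"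
proof -
  have "1 + \<i> * complex_of_real x = Complex 1 x" by (simp add: complex_eq_iff)
  then show ?thesis by (simp add: cmod_def)
qed

lemma norm_one_plus_i_times_ge_1: "1 \<le> norm (1 + \<i> * complex_of_real x)"
  unfolding norm_one_plus_i_times by simp

lemma one_plus_i_times_nonzero: "1 + \<i> * complex_of_real x \<noteq> 0"
  using norm_one_plus_i_times_ge_1[of x] by auto

lemma norm_one_plus_i_times_le_exp: "norm (1 + \<i> * complex_of_real x) \<le> exp (x\<^sup>2 / 2)"
proof -
  have "sqrt (1 + x\<^sup>2) \<le> sqrt (exp (x\<^sup>2))"
    using exp_ge_add_one_self[of "x\<^sup>2"] by (simp add: add.commute)
  also have "exp (x\<^sup>2) = (exp (x\<^sup>2 / 2))\<^sup>2" by (simp flip: exp_double)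
  finally show ?thesis unfolding norm_one_plus_i_times by simp
qed

definition riesz_prod :: "(nat \<Rightarrow> real) \<Rightarrow> nat \<Rightarrow> real \<Rightarrow> complex" where
  "riesz_prod \<mu> K z = (\<Prod>k<K. 1 + \<i> * complex_of_real (\<mu> k * rho (2 ^ k * z)))"

lemma continuous_on_riesz_prod: "continuous_on A (riesz_prod \<mu> K)"
  unfolding riesz_prod_def by (intro continuous_intros continuous_on_rho_pow2)

lemma unit_periodic_riesz_prod: "unit_periodic (riesz_prod \<mu> K)"
  using unit_periodic_scale_pow2[OF unit_periodic_rho]
  unfolding unit_periodic_def riesz_prod_def by simp

text \<open>Inductively, the factor with \<open>k = 0\<close> is integrated out by the transfer operator, which
  annihilates \<open>rho\<close>.\<close>
lemma integral_riesz_prod: "integral {0..1} (riesz_prod \<mu> K) = 1"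
proof (induction K arbitrary: \<mu>)
  case 0
  then show ?case by (simp add: riesz_prod_def)
next
  case (Suc K)
  define h where "h = (\<lambda>z. 1 + \<i> * complex_of_real (\<mu> 0 * rho z))"
  define T where "T = riesz_prod (\<lambda>k. \<mu> (Suc k)) K"
  have "continuous_on {0..1} h"
    unfolding h_def by (intro continuous_intros continuous_on_rho)
  have "riesz_prod \<mu> (Suc K) = (\<lambda>z. h z * T (2 * z))"
    unfolding riesz_prod_def T_def h_def prod.lessThan_Suc_shift by (simp add: ac_simps)
  then have "integral {0..1} (riesz_prod \<mu> (Suc K)) = integral {0..1} (\<lambda>z. h z * T (2 * z))"
    by (simp only:)
  also have "\<dots> = integral {0..1} (\<lambda>w. ((1/2) *\<^sub>R (h (w/2) + h ((w+1)/2))) * T w)"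
    unfolding T_def
    by (rule integral_doubling_transfer[OF \<open>continuous_on {0..1} h\<close> continuous_on_riesz_prod
          unit_periodic_riesz_prod])
  also have "\<dots> = integral {0..1} T"
  proof (rule integral_cong)
    fix w :: real
    assume "w \<in> {0..1}"
    have "h (w/2) + h ((w+1)/2) = 2 + \<i> * complex_of_real (\<mu> 0 * (rho (w/2) + rho ((w+1)/2)))"
      by (simp add: h_def algebra_simps)
    also have "\<dots> = 2" using rho_preimages_sum[OF \<open>w \<in> {0..1}\<close>] by simp
    finally have "h (w/2) + h ((w+1)/2) = 2" .
    then show "((1/2) *\<^sub>R (h (w/2) + h ((w+1)/2))) * T w = T w" by simp
  qed
  finally show ?case using Suc.IH by (simp add: T_def)
qed

lemma norm_riesz_prod_le: "norm (riesz_prod \<mu> K z) \<le> exp ((\<Sum>k<K. (\<mu> k)\<^sup>2) / 2)"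
proof -
  have "norm (riesz_prod \<mu> K z) \<le> (\<Prod>k<K. exp ((\<mu> k * rho (2 ^ k * z))\<^sup>2 / 2))"
    unfolding riesz_prod_def prod_norm[symmetric] by (intro prod_mono conjI norm_one_plus_i_times_le_exp) auto
  also have "\<dots> \<le> (\<Prod>k<K. exp ((\<mu> k)\<^sup>2 / 2))"
  proof (intro prod_mono conjI)
    fix k
    have "(rho (2 ^ k * z))\<^sup>2 \<le> 1" using abs_rho_le_1 by (simp add: abs_square_le_1)
    then have "(\<mu> k * rho (2 ^ k * z))\<^sup>2 \<le> (\<mu> k)\<^sup>2"
      by (simp add: power_mult_distrib mult_left_le)
    then show "exp ((\<mu> k * rho (2 ^ k * z))\<^sup>2 / 2) \<le> exp ((\<mu> k)\<^sup>2 / 2)" by simp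
  qed simp
  also have "\<dots> = exp ((\<Sum>k<K. (\<mu> k)\<^sup>2) / 2)" by (simp add: exp_sum sum_divide_distrib)
  finally show ?thesis .
qed

section \<open>Characteristic functions of lacunary sums\<close>

text \<open>Splitting \<open>exp (i x) = (1 + i x) * iexp_quot x\<close>, the first factors build a Riesz product
  and the second ones are \<open>exp (- x\<^sup>2 / 2) + O(|x|\<^sup>3)\<close>.\<close>
definition iexp_quot :: "real \<Rightarrow> complex" where
  "iexp_quot x = iexp x / (1 + \<i> * complex_of_real x)"

lemma iexp_eq_times_iexp_quot: "iexp x = (1 + \<i> * complex_of_real x) * iexp_quot x"
  unfolding iexp_quot_def using one_plus_i_times_nonzero[of x] by simp

lemma norm_iexp_quot_le_1: "norm (iexp_quot x) \<le> 1"
  unfolding iexp_quot_def norm_divide using norm_one_plus_i_times_ge_1[of x] by (simp add: divide_le_eq_1)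

lemma exp_neg_le_quadratic:
  fixes s :: real
  assumes "s \<ge> 0"
  shows "exp (- s) \<le> 1 - s + s\<^sup>2"
proof -
  have "exp (- s) \<le> 1 / (1 + s)"
    using exp_ge_add_one_self[of s] assms by (simp add: exp_minus field_simps)
  also have "1 \<le> (1 - s + s\<^sup>2) * (1 + s)"
    using assms by (simp add: algebra_simps power2_eq_square power3_eq_cube)
  then have "1 / (1 + s) \<le> 1 - s + s\<^sup>2" using assms by (simp add: divide_le_eq)
  finally show ?thesis .
qed

lemma norm_iexp_minus_gauss_factor_le:
  assumes "\<bar>x\<bar> < 1"
  shows "norm (iexp x - (1 + \<i> * complex_of_real x) * complex_of_real (exp (- x\<^sup>2 / 2))) \<le> 2 * \<bar>x\<bar> ^ 3"
proof -
  define s where "s = x\<^sup>2 / 2"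
  define R1 where "R1 = iexp x - (1 + \<i> * complex_of_real x - complex_of_real s)"
  define R2 where "R2 = exp (- s) - (1 - s)"
  have "(\<Sum>k\<le>2. (\<i> * complex_of_real x) ^ k / fact k) = 1 + \<i> * complex_of_real x - complex_of_real s"
    by (simp add: s_def numeral_2_eq_2 power2_eq_square field_simps)
  then have R1: "norm R1 \<le> \<bar>x\<bar> ^ 3 / 6"
    using iexp_approx1[of x 2] by (simp add: R1_def numeral_3_eq_3)
  have R2: "0 \<le> R2" "R2 \<le> s\<^sup>2"
    using exp_ge_add_one_self[of "- s"] exp_neg_le_quadratic[of s] by (simp_all add: R2_def s_def)
  have "s\<^sup>2 = \<bar>x\<bar> ^ 3 * \<bar>x\<bar> / 4"
    by (simp add: s_def power2_eq_square power3_eq_cube flip: abs_mult)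
  also have "\<dots> \<le> \<bar>x\<bar> ^ 3 / 4" using assms by (simp add: mult_left_le)
  finally have "R2 \<le> \<bar>x\<bar> ^ 3 / 4" using R2 by linarith
  moreover have "norm (1 + \<i> * complex_of_real x) \<le> 2"
  proof -
    have "x\<^sup>2 < 1" using assms by (simp add: abs_square_less_1)
    then have "sqrt (1 + x\<^sup>2) \<le> sqrt 4" by (intro real_sqrt_le_mono) linarith
    then show ?thesis unfolding norm_one_plus_i_times by simp
  qed
  ultimately have R2: "norm ((1 + \<i> * complex_of_real x) * complex_of_real R2) \<le> 2 * (\<bar>x\<bar> ^ 3 / 4)"
    unfolding norm_mult using R2 by (intro mult_mono) auto
  have "iexp x - (1 + \<i> * complex_of_real x) * complex_of_real (exp (- x\<^sup>2 / 2))
      = R1 + \<i> * complex_of_real (x * s) - (1 + \<i> * complex_of_real x) * complex_of_real R2"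
    unfolding R1_def R2_def s_def by (simp add: algebra_simps)
  also have "norm \<dots> \<le> norm R1 + norm (\<i> * complex_of_real (x * s))
      + norm ((1 + \<i> * complex_of_real x) * complex_of_real R2)"
    by (rule order_trans[OF norm_triangle_ineq4]) (simp add: norm_triangle_ineq)
  also have "norm (\<i> * complex_of_real (x * s)) = \<bar>x\<bar> ^ 3 / 2"
    by (simp add: norm_mult s_def abs_mult power2_eq_square power3_eq_cube)
  finally show ?thesis using R1 R2 zero_le_power[OF abs_ge_zero, of x 3] by linarith
qed

lemma norm_iexp_quot_minus_gauss_le:
  "norm (iexp_quot x - complex_of_real (exp (- x\<^sup>2 / 2))) \<le> 2 * \<bar>x\<bar> ^ 3"
proof (cases "\<bar>x\<bar> < 1")
  case True
  have "norm (iexp_quot x - complex_of_real (exp (- x\<^sup>2 / 2)))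
      = norm (iexp x - (1 + \<i> * complex_of_real x) * complex_of_real (exp (- x\<^sup>2 / 2)))
        / norm (1 + \<i> * complex_of_real x)"
    unfolding iexp_quot_def using one_plus_i_times_nonzero[of x]
    by (simp add: norm_divide field_simps)
  also have "\<dots> \<le> norm (iexp x - (1 + \<i> * complex_of_real x) * complex_of_real (exp (- x\<^sup>2 / 2)))"
    using norm_one_plus_i_times_ge_1[of x] by (simp add: divide_le_eq mult_le_cancel_left1)
  finally show ?thesis using norm_iexp_minus_gauss_factor_le[OF True] by simp
next
  case False
  have "norm (complex_of_real (exp (- x\<^sup>2 / 2))) \<le> 1" by simp
  then have "norm (iexp_quot x - complex_of_real (exp (- x\<^sup>2 / 2))) \<le> 2"
    using norm_triangle_ineq4[of "iexp_quot x" "complex_of_real (exp (- x\<^sup>2 / 2))"]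
      norm_iexp_quot_le_1[of x] by linarith
  also have "\<dots> \<le> 2 * \<bar>x\<bar> ^ 3" using False by (simp add: one_le_power)
  finally show ?thesis .
qed

lemma norm_prod_iexp_quot_minus_gauss_le:
  assumes "finite I"
  shows "norm ((\<Prod>k\<in>I. iexp_quot (x k)) - complex_of_real (exp (- (\<Sum>k\<in>I. (x k)\<^sup>2) / 2)))
    \<le> 2 * (\<Sum>k\<in>I. \<bar>x k\<bar> ^ 3)"
proof -
  have "complex_of_real (exp (- (\<Sum>k\<in>I. (x k)\<^sup>2) / 2)) = (\<Prod>k\<in>I. complex_of_real (exp (- (x k)\<^sup>2 / 2)))"
    using assms by (simp add: exp_sum sum_divide_distrib flip: sum_negf of_real_prod)
  moreover have "norm ((\<Prod>k\<in>I. iexp_quot (x k)) - (\<Prod>k\<in>I. complex_of_real (exp (- (x k)\<^sup>2 / 2))))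
      \<le> (\<Sum>k\<in>I. norm (iexp_quot (x k) - complex_of_real (exp (- (x k)\<^sup>2 / 2))))"
    by (rule norm_prod_diff) (auto simp: norm_iexp_quot_le_1)
  moreover have "\<dots> \<le> (\<Sum>k\<in>I. 2 * \<bar>x k\<bar> ^ 3)"
    by (intro sum_mono norm_iexp_quot_minus_gauss_le)
  ultimately show ?thesis by (simp add: sum_distrib_left)
qed

lemma abs_exp_diff_le_nonpos:
  fixes a b :: real
  assumes "a \<le> 0" "b \<le> 0"
  shows "\<bar>exp a - exp b\<bar> \<le> \<bar>a - b\<bar>"
proof -
  have *: "exp y - exp x \<le> y - x" if "x \<le> y" "y \<le> 0" for x y :: real
  proof -
    have "exp y - exp x = exp y * (1 - exp (x - y))" by (simp add: exp_diff field_simps)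
    also have "\<dots> \<le> 1 - exp (x - y)"
      using that by (intro mult_left_le_one_le) auto
    also have "\<dots> \<le> y - x" using exp_ge_add_one_self[of "x - y"] by linarith
    finally show ?thesis .
  qed
  show ?thesis using *[of a b] *[of b a] assms by (cases "a \<le> b") auto
qed

lemma norm_riesz_prod_scaled_le:
  assumes "(\<Sum>k<K. (b k)\<^sup>2) \<le> 1"
  shows "norm (riesz_prod (\<lambda>k. t * sqrt 3 * b k) K z) \<le> exp (3 * t\<^sup>2 / 2)"
proof -
  have "(\<Sum>k<K. (t * sqrt 3 * b k)\<^sup>2) = 3 * t\<^sup>2 * (\<Sum>k<K. (b k)\<^sup>2)"
    by (simp add: power_mult_distrib sum_distrib_left ac_simps)
  also have "\<dots> \<le> 3 * t\<^sup>2" using assms by (simp add: mult_left_le)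
  finally have "exp ((\<Sum>k<K. (t * sqrt 3 * b k)\<^sup>2) / 2) \<le> exp (3 * t\<^sup>2 / 2)" by simp
  then show ?thesis by (rule order_trans[OF norm_riesz_prod_le])
qed

lemma sum_abs_cube_scaled_rho_le:
  fixes b :: "nat \<Rightarrow> real"
  assumes b: "\<And>k. \<bar>b k\<bar> \<le> m" and b_sq: "(\<Sum>k<K. (b k)\<^sup>2) \<le> 1"
  shows "2 * (\<Sum>k<K. \<bar>t * sqrt 3 * b k * rho (2 ^ k * z)\<bar> ^ 3) \<le> 6 * sqrt 3 * \<bar>t\<bar> ^ 3 * m"
proof -
  have "\<bar>t * sqrt 3 * b k * rho (2 ^ k * z)\<bar> ^ 3 \<le> 3 * sqrt 3 * \<bar>t\<bar> ^ 3 * m * (b k)\<^sup>2" for k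
  proof -
    have "\<bar>t * sqrt 3 * b k * rho (2 ^ k * z)\<bar> \<le> \<bar>t\<bar> * sqrt 3 * \<bar>b k\<bar>"
      unfolding abs_mult using abs_rho_le_1[of "2 ^ k * z"] by (simp add: mult_left_le)
    then have "\<bar>t * sqrt 3 * b k * rho (2 ^ k * z)\<bar> ^ 3 \<le> (\<bar>t\<bar> * sqrt 3 * \<bar>b k\<bar>) ^ 3"
      by (intro power_mono) auto
    also have "\<dots> = 3 * sqrt 3 * \<bar>t\<bar> ^ 3 * \<bar>b k\<bar> * (b k)\<^sup>2"
    proof -
      have "(sqrt 3) ^ 3 = 3 * sqrt (3::real)" "\<bar>b k\<bar> ^ 3 = \<bar>b k\<bar> * (b k)\<^sup>2"
        by (simp_all add: power3_eq_cube power2_eq_square abs_mult_self_eq)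
      then show ?thesis by (simp add: power_mult_distrib)
    qed
    also have "\<dots> \<le> 3 * sqrt 3 * \<bar>t\<bar> ^ 3 * m * (b k)\<^sup>2"
      by (intro mult_right_mono mult_left_mono b) auto
    finally show ?thesis .
  qed
  then have "2 * (\<Sum>k<K. \<bar>t * sqrt 3 * b k * rho (2 ^ k * z)\<bar> ^ 3)
      \<le> 6 * sqrt 3 * \<bar>t\<bar> ^ 3 * m * (\<Sum>k<K. (b k)\<^sup>2)"
    unfolding sum_distrib_left by (intro sum_mono) (simp add: ac_simps)
  also have "\<dots> \<le> 6 * sqrt 3 * \<bar>t\<bar> ^ 3 * m"
    using b_sq b[of 0] by (simp add: mult_left_le)
  finally show ?thesis .
qed

lemma abs_exp_variance_diff_le:
  fixes Q :: real
  assumes "Q \<ge> 0"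
  shows "\<bar>exp (- (t\<^sup>2 * Q) / 2) - exp (- t\<^sup>2 / 2)\<bar> \<le> (t\<^sup>2 / 2) * \<bar>Q - 1\<bar>"
proof -
  have "\<bar>exp (- (t\<^sup>2 * Q) / 2) - exp (- t\<^sup>2 / 2)\<bar> \<le> \<bar>- (t\<^sup>2 * Q) / 2 - - t\<^sup>2 / 2\<bar>"
    using assms by (intro abs_exp_diff_le_nonpos) auto
  also have "- (t\<^sup>2 * Q) / 2 - - t\<^sup>2 / 2 = (t\<^sup>2 / 2) * (1 - Q)" by (simp add: algebra_simps)
  also have "\<bar>(t\<^sup>2 / 2) * (1 - Q)\<bar> = (t\<^sup>2 / 2) * \<bar>Q - 1\<bar>" by (simp add: abs_mult abs_minus_commute)
  finally show ?thesis .
qed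

text \<open>With \<open>x k = t sqrt 3 b k rho (2\<^sup>k z)\<close>, \<open>exp (i \<Sum> x k) = T * \<Prod> iexp_quot (x k)\<close> for the
  Riesz product \<open>T\<close>, and \<open>\<Prod> iexp_quot (x k)\<close> is close to \<open>exp (- \<Sum> (x k)\<^sup>2 / 2)\<close>, where
  \<open>\<Sum> (x k)\<^sup>2\<close> is \<open>t\<^sup>2\<close> times the random variance.\<close>
lemma norm_iexp_partial_sum_minus_gauss_riesz_le:
  fixes b :: "nat \<Rightarrow> real"
  assumes b: "\<And>k. \<bar>b k\<bar> \<le> m" and b_sq: "(\<Sum>k<K. (b k)\<^sup>2) \<le> 1"
  shows "norm (iexp (t * (sqrt 3 * (\<Sum>k<K. b k * rho (2 ^ k * z))))
               - complex_of_real (exp (- t\<^sup>2 / 2)) * riesz_prod (\<lambda>k. t * sqrt 3 * b k) K z)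
     \<le> exp (3 * t\<^sup>2 / 2) * (6 * sqrt 3 * \<bar>t\<bar> ^ 3 * m
          + (t\<^sup>2 / 2) * \<bar>3 * (\<Sum>k<K. (b k)\<^sup>2 * (rho (2 ^ k * z))\<^sup>2) - 1\<bar>)"
proof -
  define x where "x k = t * sqrt 3 * b k * rho (2 ^ k * z)" for k
  define Q where "Q = 3 * (\<Sum>k<K. (b k)\<^sup>2 * (rho (2 ^ k * z))\<^sup>2)"
  define T where "T = riesz_prod (\<lambda>k. t * sqrt 3 * b k) K z"
  define U where "U = (\<Prod>k<K. iexp_quot (x k))"
  have "t * (sqrt 3 * (\<Sum>k<K. b k * rho (2 ^ k * z))) = (\<Sum>k<K. x k)"
    unfolding x_def by (simp add: sum_distrib_left mult.assoc)
  moreover have "iexp (\<Sum>k<K. x k) = (\<Prod>k<K. iexp (x k))"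
    by (simp add: sum_distrib_left exp_sum)
  also have "\<dots> = T * U"
    by (simp only: iexp_eq_times_iexp_quot prod.distrib) (simp add: T_def U_def riesz_prod_def x_def)
  ultimately have eq: "iexp (t * (sqrt 3 * (\<Sum>k<K. b k * rho (2 ^ k * z))))
      - complex_of_real (exp (- t\<^sup>2 / 2)) * T = T * (U - complex_of_real (exp (- t\<^sup>2 / 2)))"
    by (simp add: algebra_simps)
  have sq: "(\<Sum>k<K. (x k)\<^sup>2) = t\<^sup>2 * Q"
    by (simp add: x_def Q_def power_mult_distrib sum_distrib_left ac_simps)
  have cubes: "2 * (\<Sum>k<K. \<bar>x k\<bar> ^ 3) \<le> 6 * sqrt 3 * \<bar>t\<bar> ^ 3 * m"
    unfolding x_def by (rule sum_abs_cube_scaled_rho_le[OF b b_sq])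
  have "norm (U - complex_of_real (exp (- (t\<^sup>2 * Q) / 2))) \<le> 6 * sqrt 3 * \<bar>t\<bar> ^ 3 * m"
    unfolding U_def sq[symmetric]
    by (rule order_trans[OF norm_prod_iexp_quot_minus_gauss_le cubes]) simp
  moreover have "Q \<ge> 0" unfolding Q_def by (intro mult_nonneg_nonneg sum_nonneg) auto
  then have "norm (complex_of_real (exp (- (t\<^sup>2 * Q) / 2)) - complex_of_real (exp (- t\<^sup>2 / 2)))
      \<le> (t\<^sup>2 / 2) * \<bar>Q - 1\<bar>"
    unfolding of_real_diff[symmetric] norm_of_real by (rule abs_exp_variance_diff_le)
  ultimately have "norm (U - complex_of_real (exp (- t\<^sup>2 / 2))) \<le> 6 * sqrt 3 * \<bar>t\<bar> ^ 3 * m + (t\<^sup>2 / 2) * \<bar>Q - 1\<bar>"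
    by (rule norm_diff_triangle_le)
  with norm_riesz_prod_scaled_le[OF b_sq, of t z, folded T_def] show ?thesis
    unfolding Q_def[symmetric] T_def[symmetric] eq norm_mult by (intro mult_mono) auto
qed

lemma abs_le_am_gm:
  fixes m y :: real
  assumes "m > 0"
  shows "\<bar>y\<bar> \<le> m / 2 + y\<^sup>2 / (2 * m)"
proof -
  have "0 \<le> (\<bar>y\<bar> - m)\<^sup>2" by simp
  then show ?thesis using assms by (simp add: field_simps power2_eq_square algebra_simps)
qed

text \<open>The Riesz product integrates to \<open>1\<close>; after the AM-GM step
  \<open>|y| \<le> m/2 + y\<^sup>2/(2m)\<close> the variance deviation enters only through its \<open>L\<^sup>2\<close> norm.\<close>
lemma norm_char_partial_sum_minus_gauss_le:
  fixes b :: "nat \<Rightarrow> real"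
  assumes b: "\<And>k. \<bar>b k\<bar> \<le> m" and m: "m > 0" and b_sq: "(\<Sum>k<K. (b k)\<^sup>2) \<le> 1"
  shows "norm (integral {0..1} (\<lambda>z. iexp (t * (sqrt 3 * (\<Sum>k<K. b k * rho (2 ^ k * z)))))
               - complex_of_real (exp (- t\<^sup>2 / 2)))
     \<le> exp (3 * t\<^sup>2 / 2) * (6 * sqrt 3 * \<bar>t\<bar> ^ 3 * m
          + (t\<^sup>2 / 2) * (m / 2 + (144 * m\<^sup>2 + (1 - (\<Sum>k<K. (b k)\<^sup>2))\<^sup>2) / (2 * m)))"
proof -
  define f where "f z = iexp (t * (sqrt 3 * (\<Sum>k<K. b k * rho (2 ^ k * z))))" for z
  define T where "T = riesz_prod (\<lambda>k. t * sqrt 3 * b k) K"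
  define e where "e = complex_of_real (exp (- t\<^sup>2 / 2))"
  define Q where "Q z = 3 * (\<Sum>k<K. (b k)\<^sup>2 * (rho (2 ^ k * z))\<^sup>2)" for z
  define \<alpha> where "\<alpha> = exp (3 * t\<^sup>2 / 2) * (6 * sqrt 3 * \<bar>t\<bar> ^ 3 * m + t\<^sup>2 * m / 4)"
  define \<beta> where "\<beta> = exp (3 * t\<^sup>2 / 2) * t\<^sup>2 / (4 * m)"
  have f: "continuous_on {0..1} f" unfolding f_def
    by (intro continuous_intros continuous_on_rho_pow2)
  have T: "continuous_on {0..1} T" unfolding T_def by (rule continuous_on_riesz_prod)
  have Q: "continuous_on {0..1} Q" unfolding Q_def
    by (intro continuous_intros continuous_on_rho_pow2)
  have "integral {0..1} f - e = integral {0..1} (\<lambda>z. f z - e * T z)"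
    using f T integral_riesz_prod[of "\<lambda>k. t * sqrt 3 * b k" K]
    by (simp add: T_def integral_diff integrable_continuous_interval continuous_intros)
  also have "norm \<dots> \<le> integral {0..1} (\<lambda>z. \<alpha> + \<beta> * (Q z - 1)\<^sup>2)"
  proof (rule integral_norm_bound_integral)
    show "(\<lambda>z. f z - e * T z) integrable_on {0..1}" "(\<lambda>z. \<alpha> + \<beta> * (Q z - 1)\<^sup>2) integrable_on {0..1}"
      by (intro integrable_continuous_interval continuous_intros f T Q)+
    fix z :: real
    have "norm (f z - e * T z)
        \<le> exp (3 * t\<^sup>2 / 2) * (6 * sqrt 3 * \<bar>t\<bar> ^ 3 * m + (t\<^sup>2 / 2) * \<bar>Q z - 1\<bar>)"
      unfolding f_def e_def T_def Q_def by (rule norm_iexp_partial_sum_minus_gauss_riesz_le[OF b b_sq])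
    also have "\<dots> \<le> exp (3 * t\<^sup>2 / 2) * (6 * sqrt 3 * \<bar>t\<bar> ^ 3 * m
        + (t\<^sup>2 / 2) * (m / 2 + (Q z - 1)\<^sup>2 / (2 * m)))"
      by (intro mult_left_mono add_left_mono abs_le_am_gm m) auto
    also have "\<dots> = \<alpha> + \<beta> * (Q z - 1)\<^sup>2"
      unfolding \<alpha>_def \<beta>_def using m by (simp add: field_simps)
    finally show "norm (f z - e * T z) \<le> \<alpha> + \<beta> * (Q z - 1)\<^sup>2" .
  qed
  also have "\<dots> = \<alpha> + \<beta> * integral {0..1} (\<lambda>z. (Q z - 1)\<^sup>2)"
    using Q by (simp add: integral_add integrable_continuous_interval continuous_intros)
  also have "\<dots> \<le> \<alpha> + \<beta> * (144 * m\<^sup>2 + (1 - (\<Sum>k<K. (b k)\<^sup>2))\<^sup>2)"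
  proof -
    have "integral {0..1} (\<lambda>z. (Q z - 1)\<^sup>2) \<le> 144 * m\<^sup>2 * (\<Sum>k<K. (b k)\<^sup>2) + (1 - (\<Sum>k<K. (b k)\<^sup>2))\<^sup>2"
      unfolding Q_def by (rule integral_square_variance_sum_dev_le[OF b])
    also have "\<dots> \<le> 144 * m\<^sup>2 + (1 - (\<Sum>k<K. (b k)\<^sup>2))\<^sup>2"
      using b_sq by (simp add: mult_left_le)
    finally show ?thesis using m by (intro add_left_mono mult_left_mono) (auto simp: \<beta>_def)
  qed
  also have "\<dots> = exp (3 * t\<^sup>2 / 2) * (6 * sqrt 3 * \<bar>t\<bar> ^ 3 * m
          + (t\<^sup>2 / 2) * (m / 2 + (144 * m\<^sup>2 + (1 - (\<Sum>k<K. (b k)\<^sup>2))\<^sup>2) / (2 * m)))"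
    unfolding \<alpha>_def \<beta>_def using m by (simp add: field_simps)
  finally show ?thesis unfolding f_def e_def .
qed

lemma summable_square_if_summable_abs:
  fixes c :: "nat \<Rightarrow> real"
  assumes c: "summable (\<lambda>n. \<bar>c n\<bar>)"
  shows "summable (\<lambda>n. (c n)\<^sup>2)"
proof (rule summable_comparison_test[OF _ c])
  obtain N where N: "\<forall>n\<ge>N. \<bar>c n\<bar> < 1"
    using LIMSEQ_D[OF summable_LIMSEQ_zero[OF c], of 1] by auto
  have "norm ((c n)\<^sup>2) \<le> \<bar>c n\<bar>" if "n \<ge> N" for n
  proof -
    have "norm ((c n)\<^sup>2) = \<bar>c n\<bar> * \<bar>c n\<bar>" by (simp add: power2_eq_square abs_mult)
    also have "\<dots> \<le> \<bar>c n\<bar> * 1" using N that by (intro mult_left_mono) auto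
    finally show ?thesis by simp
  qed
  then show "\<exists>N. \<forall>n\<ge>N. norm ((c n)\<^sup>2) \<le> \<bar>c n\<bar>" by blast
qed

text \<open>Each \<open>rho (2\<^sup>k z)\<close> has variance \<open>1/3\<close>, whence the factor \<open>sqrt 3\<close>.\<close>
definition lacunary_sum :: "(nat \<Rightarrow> real) \<Rightarrow> real \<Rightarrow> real" where
  "lacunary_sum b z = sqrt 3 * (\<Sum>k. b k * rho (2 ^ k * z))"

lemma summable_coeff_rho_pow2:
  assumes "summable (\<lambda>k. \<bar>b k\<bar>)"
  shows "summable (\<lambda>k. b k * rho (2 ^ k * z))"
  by (rule summable_comparison_test[OF _ assms]) (auto simp: abs_mult intro!: mult_left_le abs_rho_le_1)

lemma continuous_on_lacunary_sum:
  assumes "summable (\<lambda>k. \<bar>b k\<bar>)"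
  shows "continuous_on A (lacunary_sum b)"
proof -
  have "uniform_limit UNIV (\<lambda>n z. \<Sum>k<n. b k * rho (2 ^ k * z)) (\<lambda>z. \<Sum>k. b k * rho (2 ^ k * z)) sequentially"
    by (rule Weierstrass_m_test[OF _ assms]) (auto simp: abs_mult intro!: mult_left_le abs_rho_le_1)
  then have "continuous_on UNIV (\<lambda>z. \<Sum>k. b k * rho (2 ^ k * z))"
    by (rule uniform_limit_theorem[rotated])
       (auto intro!: always_eventually continuous_intros continuous_on_rho_pow2)
  then show ?thesis unfolding lacunary_sum_def[abs_def]
    by (intro continuous_intros) (auto intro: continuous_on_subset)
qed

lemma unit_periodic_lacunary_sum: "unit_periodic (lacunary_sum b)"
  using unit_periodic_scale_pow2[OF unit_periodic_rho]
  unfolding unit_periodic_def lacunary_sum_def by simp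

lemma abs_lacunary_tail_le:
  assumes b: "summable (\<lambda>k. \<bar>b k\<bar>)"
  shows "\<bar>(\<Sum>k. b k * rho (2 ^ k * z)) - (\<Sum>k<K. b k * rho (2 ^ k * z))\<bar> \<le> (\<Sum>n. \<bar>b (n + K)\<bar>)"
proof -
  have tail: "summable (\<lambda>n. \<bar>b (n + K)\<bar>)" using summable_ignore_initial_segment[OF b] .
  have abs_terms: "summable (\<lambda>n. \<bar>b (n + K) * rho (2 ^ (n + K) * z)\<bar>)"
    by (rule summable_comparison_test[OF _ tail]) (auto simp: abs_mult intro!: mult_left_le abs_rho_le_1)
  have "(\<Sum>k. b k * rho (2 ^ k * z)) - (\<Sum>k<K. b k * rho (2 ^ k * z)) = (\<Sum>n. b (n + K) * rho (2 ^ (n + K) * z))"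
    using suminf_split_initial_segment[OF summable_coeff_rho_pow2[OF b, where z=z], of K] by simp
  also have "\<bar>\<dots>\<bar> \<le> (\<Sum>n. \<bar>b (n + K) * rho (2 ^ (n + K) * z)\<bar>)"
    by (rule summable_rabs[OF abs_terms])
  also have "\<dots> \<le> (\<Sum>n. \<bar>b (n + K)\<bar>)"
    by (rule suminf_le[OF _ abs_terms tail]) (auto simp: abs_mult intro!: mult_left_le abs_rho_le_1)
  finally show ?thesis .
qed

lemma norm_iexp_diff_le: "norm (iexp a - iexp b) \<le> \<bar>a - b\<bar>"
proof -
  have "iexp a - iexp b = iexp b * (iexp (a - b) - 1)"
    by (simp add: algebra_simps exp_add[symmetric])
  then have "norm (iexp a - iexp b) = norm (iexp (a - b) - 1)" by (simp add: norm_mult)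
  also have "\<dots> \<le> \<bar>a - b\<bar>" using iexp_approx1[of "a - b" 0] by simp
  finally show ?thesis .
qed

lemma norm_char_lacunary_sum_minus_partial_le:
  assumes b: "summable (\<lambda>k. \<bar>b k\<bar>)"
  shows "norm (integral {0..1} (\<lambda>z. iexp (t * lacunary_sum b z))
      - integral {0..1} (\<lambda>z. iexp (t * (sqrt 3 * (\<Sum>k<K. b k * rho (2 ^ k * z))))))
    \<le> \<bar>t\<bar> * sqrt 3 * (\<Sum>n. \<bar>b (n + K)\<bar>)"
proof -
  define F where "F z = iexp (t * lacunary_sum b z)" for z
  define FK where "FK z = iexp (t * (sqrt 3 * (\<Sum>k<K. b k * rho (2 ^ k * z))))" for z
  have int: "F integrable_on {0..1}" "FK integrable_on {0..1}"
    unfolding F_def FK_def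
    by (auto intro!: integrable_continuous_interval continuous_intros continuous_on_lacunary_sum[OF b]
        continuous_on_rho_pow2)
  then have "integral {0..1} F - integral {0..1} FK = integral {0..1} (\<lambda>z. F z - FK z)"
    by (simp add: integral_diff)
  also have "norm \<dots> \<le> integral {0..1} (\<lambda>z::real. \<bar>t\<bar> * sqrt 3 * (\<Sum>n. \<bar>b (n + K)\<bar>))"
  proof (rule integral_norm_bound_integral)
    fix z :: real
    have "norm (F z - FK z) \<le> \<bar>t * lacunary_sum b z - t * (sqrt 3 * (\<Sum>k<K. b k * rho (2 ^ k * z)))\<bar>"
      unfolding F_def FK_def by (rule norm_iexp_diff_le)
    also have "t * lacunary_sum b z - t * (sqrt 3 * (\<Sum>k<K. b k * rho (2 ^ k * z)))
        = (t * sqrt 3) * ((\<Sum>k. b k * rho (2 ^ k * z)) - (\<Sum>k<K. b k * rho (2 ^ k * z)))"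
      by (simp add: lacunary_sum_def algebra_simps)
    also have "\<bar>\<dots>\<bar> = \<bar>t\<bar> * sqrt 3 * \<bar>(\<Sum>k. b k * rho (2 ^ k * z)) - (\<Sum>k<K. b k * rho (2 ^ k * z))\<bar>"
      by (simp add: abs_mult)
    also have "\<dots> \<le> \<bar>t\<bar> * sqrt 3 * (\<Sum>n. \<bar>b (n + K)\<bar>)"
      by (intro mult_left_mono abs_lacunary_tail_le[OF b]) auto
    finally show "norm (F z - FK z) \<le> \<bar>t\<bar> * sqrt 3 * (\<Sum>n. \<bar>b (n + K)\<bar>)" .
  qed (use int in \<open>auto intro: integrable_diff\<close>)
  also have "\<dots> = \<bar>t\<bar> * sqrt 3 * (\<Sum>n. \<bar>b (n + K)\<bar>)" by simp
  finally show ?thesis unfolding F_def[abs_def] FK_def[abs_def] .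
qed

lemma norm_char_lacunary_sum_minus_gauss_le:
  assumes b: "summable (\<lambda>k. \<bar>b k\<bar>)" and b_sq: "(\<Sum>k. (b k)\<^sup>2) = 1"
    and m: "m > 0" and b_le: "\<And>k. \<bar>b k\<bar> \<le> m"
  shows "norm (integral {0..1} (\<lambda>z. iexp (t * lacunary_sum b z)) - complex_of_real (exp (- t\<^sup>2 / 2)))
    \<le> exp (3 * t\<^sup>2 / 2) * (6 * sqrt 3 * \<bar>t\<bar> ^ 3 + 37 * t\<^sup>2) * m"
proof -
  define B where "B \<tau> = exp (3 * t\<^sup>2 / 2) * (6 * sqrt 3 * \<bar>t\<bar> ^ 3 * m + (t\<^sup>2 / 2) * (m / 2 + (144 * m\<^sup>2 + \<tau>\<^sup>2) / (2 * m)))"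
    for \<tau>
  define g where "g K = \<bar>t\<bar> * sqrt 3 * (\<Sum>n. \<bar>b (n + K)\<bar>) + B (1 - (\<Sum>k<K. (b k)\<^sup>2))" for K
  have sq: "summable (\<lambda>k. (b k)\<^sup>2)" by (rule summable_square_if_summable_abs[OF b])
  have "norm (integral {0..1} (\<lambda>z. iexp (t * lacunary_sum b z)) - complex_of_real (exp (- t\<^sup>2 / 2))) \<le> g K" for K
  proof -
    have "(\<Sum>k<K. (b k)\<^sup>2) \<le> 1" using sum_le_suminf[OF sq, of "{..<K}"] b_sq by simp
    then show ?thesis
      unfolding g_def B_def
      by (rule norm_diff_triangle_le[OF norm_char_lacunary_sum_minus_partial_le[OF b]
            norm_char_partial_sum_minus_gauss_le[OF b_le m]])
  qed
  moreover have "g \<longlonglongrightarrow> \<bar>t\<bar> * sqrt 3 * 0 + B 0"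
  proof -
    have "(\<lambda>K. \<Sum>n. \<bar>b (n + K)\<bar>) \<longlonglongrightarrow> 0"
      using tendsto_diff[OF tendsto_const summable_LIMSEQ[OF b], of "\<Sum>k. \<bar>b k\<bar>"]
      by (simp add: suminf_minus_initial_segment[OF b])
    moreover have "(\<lambda>K. 1 - (\<Sum>k<K. (b k)\<^sup>2)) \<longlonglongrightarrow> 0"
      using tendsto_diff[OF tendsto_const summable_LIMSEQ[OF sq], of 1] b_sq by simp
    ultimately show ?thesis unfolding g_def B_def by (intro tendsto_intros) (use m in auto)
  qed
  ultimately have "norm (integral {0..1} (\<lambda>z. iexp (t * lacunary_sum b z)) - complex_of_real (exp (- t\<^sup>2 / 2)))
      \<le> \<bar>t\<bar> * sqrt 3 * 0 + B 0"
    by (intro LIMSEQ_le_const) auto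
  also have "\<dots> \<le> exp (3 * t\<^sup>2 / 2) * (6 * sqrt 3 * \<bar>t\<bar> ^ 3 + 37 * t\<^sup>2) * m"
  proof -
    have "(t\<^sup>2 / 2) * (m / 2 + (144 * m\<^sup>2 + 0\<^sup>2) / (2 * m)) \<le> 37 * t\<^sup>2 * m"
      using m by (simp add: field_simps power2_eq_square)
    then have "B 0 \<le> exp (3 * t\<^sup>2 / 2) * (6 * sqrt 3 * \<bar>t\<bar> ^ 3 * m + 37 * t\<^sup>2 * m)"
      unfolding B_def by (intro mult_left_mono add_left_mono) auto
    then show ?thesis by (simp add: algebra_simps)
  qed
  finally show ?thesis .
qed

lemma tendsto_char_lacunary_sum_gauss:
  fixes b :: "nat \<Rightarrow> nat \<Rightarrow> real" and p :: "nat \<Rightarrow> nat"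
  assumes b: "\<And>N. summable (\<lambda>k. \<bar>b N k\<bar>)" and b_sq: "\<And>N. (\<Sum>k. (b N k)\<^sup>2) = 1"
    and small: "\<And>e. e > 0 \<Longrightarrow> eventually (\<lambda>N. \<forall>k. \<bar>b N k\<bar> \<le> e) sequentially"
  shows "(\<lambda>N. integral {0..1} (\<lambda>x. iexp (t * lacunary_sum (b N) (2 ^ p N * x))))
    \<longlonglongrightarrow> complex_of_real (exp (- t\<^sup>2 / 2))"
proof -
  define C where "C = exp (3 * t\<^sup>2 / 2) * (6 * sqrt 3 * \<bar>t\<bar> ^ 3 + 37 * t\<^sup>2)"
  have "C \<ge> 0" unfolding C_def by simp
  have "integral {0..1} (\<lambda>x. iexp (t * lacunary_sum (b N) (2 ^ p N * x)))
      = integral {0..1} (\<lambda>z. iexp (t * lacunary_sum (b N) z))" for N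
  proof (rule integral_doubling_pow_invariant[where G="\<lambda>z. iexp (t * lacunary_sum (b N) z)"])
    show "continuous_on UNIV (\<lambda>z. iexp (t * lacunary_sum (b N) z))"
      by (intro continuous_intros continuous_on_lacunary_sum b)
    show "unit_periodic (\<lambda>z. iexp (t * lacunary_sum (b N) z))"
      using unit_periodic_lacunary_sum unfolding unit_periodic_def by simp
  qed
  moreover have "(\<lambda>N. integral {0..1} (\<lambda>z. iexp (t * lacunary_sum (b N) z)))
      \<longlonglongrightarrow> complex_of_real (exp (- t\<^sup>2 / 2))"
  proof (rule tendstoI)
    fix r :: real
    assume "r > 0"
    define e where "e = r / (C + 1)"
    have "e > 0" "C * e < r"
      using \<open>r > 0\<close> \<open>C \<ge> 0\<close> by (simp_all add: e_def field_simps)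
    show "eventually (\<lambda>N. dist (integral {0..1} (\<lambda>z. iexp (t * lacunary_sum (b N) z)))
        (complex_of_real (exp (- t\<^sup>2 / 2))) < r) sequentially"
      using small[OF \<open>e > 0\<close>]
    proof (rule eventually_mono)
      fix N
      assume "\<forall>k. \<bar>b N k\<bar> \<le> e"
      then have "dist (integral {0..1} (\<lambda>z. iexp (t * lacunary_sum (b N) z)))
          (complex_of_real (exp (- t\<^sup>2 / 2))) \<le> C * e"
        unfolding dist_norm C_def
        by (intro norm_char_lacunary_sum_minus_gauss_le[OF b b_sq \<open>e > 0\<close>]) auto
      with \<open>C * e < r\<close> show "dist (integral {0..1} (\<lambda>z. iexp (t * lacunary_sum (b N) z)))
          (complex_of_real (exp (- t\<^sup>2 / 2))) < r" by linarith
    qed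
  qed
  ultimately show ?thesis by simp
qed

section \<open>Convergence of distribution functions\<close>

lemma cdf_std_normal_distribution:
  "cdf std_normal_distribution u = (LBINT t:{..u}. exp (- t\<^sup>2 / 2) / sqrt (2 * pi))"
proof -
  have "cdf std_normal_distribution u = integral\<^sup>L std_normal_distribution (indicator {..u})"
    by (simp add: cdf_def)
  also have "\<dots> = integral\<^sup>L lborel (\<lambda>x. std_normal_density x *\<^sub>R indicator {..u} x)"
    by (rule integral_density) auto
  also have "\<dots> = (LBINT t:{..u}. exp (- t\<^sup>2 / 2) / sqrt (2 * pi))"
    unfolding set_lebesgue_integral_def
    by (rule Bochner_Integration.integral_cong) (auto simp: std_normal_density_def)
  finally show ?thesis .
qed

lemma isCont_cdf_std_normal_distribution: "isCont (cdf std_normal_distribution) u"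
proof -
  interpret real_distribution std_normal_distribution by (rule real_dist_normal_dist)
  have "measure std_normal_distribution {u} = integral\<^sup>L std_normal_distribution (indicator {u})"
    by simp
  also have "\<dots> = integral\<^sup>L lborel (\<lambda>x. std_normal_density x *\<^sub>R indicator {u} x)"
    by (rule integral_density) auto
  also have "\<dots> = 0"
    by (rule integral_eq_zero_AE) (use AE_lborel_singleton[of u] in \<open>auto elim!: AE_mp\<close>)
  finally show ?thesis by (simp add: isCont_cdf)
qed

lemma prob_space_lebesgue_on_unit_interval: "prob_space (lebesgue_on {0..1::real})"
  by (rule prob_spaceI) (simp add: emeasure_restrict_space)

lemma char_distr_lebesgue_unit_interval:
  fixes f :: "real \<Rightarrow> real"
  assumes f: "continuous_on {0..1} f"
  shows "char (distr (lebesgue_on {0..1}) borel f) t = integral {0..1} (\<lambda>x. iexp (t * f x))"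
proof -
  interpret P: prob_space "lebesgue_on {0..1::real}" by (rule prob_space_lebesgue_on_unit_interval)
  have f_meas: "f \<in> borel_measurable (lebesgue_on {0..1})"
    using f by (rule continuous_imp_measurable_on_sets_lebesgue) simp
  have "continuous_on {0..1} (\<lambda>x. iexp (t * f x))" by (intro continuous_intros f)
  then have "(\<lambda>x. iexp (t * f x)) \<in> borel_measurable (lebesgue_on {0..1})"
    by (rule continuous_imp_measurable_on_sets_lebesgue) simp
  then have "integrable (lebesgue_on {0..1}) (\<lambda>x. iexp (t * f x))"
    by (intro P.integrable_const_bound[where B=1]) auto
  then have "((\<lambda>x. iexp (t * f x)) has_integral (LINT x|lebesgue_on {0..1}. iexp (t * f x))) {0..1}"
    by (rule has_integral_integral_lebesgue_on) simp
  moreover have "char (distr (lebesgue_on {0..1}) borel f) t = (LINT x|lebesgue_on {0..1}. iexp (t * f x))"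
    unfolding char_def by (rule integral_distr[OF f_meas]) (intro borel_measurable_continuous_onI continuous_intros)
  ultimately show ?thesis by (simp add: integral_unique)
qed

lemma tendsto_measure_le_std_normal_cdf:
  fixes F :: "nat \<Rightarrow> real \<Rightarrow> real"
  assumes F: "\<And>N. continuous_on {0..1} (F N)"
    and char: "\<And>t. (\<lambda>N. integral {0..1} (\<lambda>x. iexp (t * F N x))) \<longlonglongrightarrow> complex_of_real (exp (- t\<^sup>2 / 2))"
  shows "(\<lambda>N. measure lebesgue {x \<in> {0..1}. F N x \<le> u})
    \<longlonglongrightarrow> (LBINT t:{..u}. exp (- t\<^sup>2 / 2) / sqrt (2 * pi))"
proof -
  define M where "M N = distr (lebesgue_on {0..1}) borel (F N)" for N
  have F_meas: "F N \<in> borel_measurable (lebesgue_on {0..1})" for N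
    using F by (rule continuous_imp_measurable_on_sets_lebesgue) simp
  have M: "real_distribution (M N)" for N
    unfolding M_def by (rule prob_space.real_distribution_distr[OF prob_space_lebesgue_on_unit_interval F_meas])
  have "weak_conv_m M std_normal_distribution"
    using char by (intro levy_continuity[OF M real_dist_normal_dist])
      (simp add: M_def char_distr_lebesgue_unit_interval[OF F] char_std_normal_distribution)
  then have "(\<lambda>N. cdf (M N) u) \<longlonglongrightarrow> cdf std_normal_distribution u"
    using isCont_cdf_std_normal_distribution unfolding weak_conv_m_def weak_conv_def by blast
  moreover have "cdf (M N) u = measure lebesgue {x \<in> {0..1}. F N x \<le> u}" for N
  proof -
    have "cdf (M N) u = measure (lebesgue_on {0..1}) (F N -` {..u} \<inter> space (lebesgue_on {0..1}))"
      unfolding cdf_def M_def by (rule measure_distr[OF F_meas]) simp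
    also have "F N -` {..u} \<inter> space (lebesgue_on {0..1}) = {x \<in> {0..1}. F N x \<le> u}"
      by auto
    also have "measure (lebesgue_on {0..1}) {x \<in> {0..1}. F N x \<le> u} = measure lebesgue {x \<in> {0..1}. F N x \<le> u}"
      by (rule measure_restrict_space) auto
    finally show ?thesis .
  qed
  ultimately show ?thesis by (simp add: cdf_std_normal_distribution)
qed

section \<open>Normalised tails and the tent-map statistic\<close>

lemma suminf_sq_tail_antimono:
  fixes c :: "nat \<Rightarrow> real"
  assumes "summable (\<lambda>n. (c n)\<^sup>2)" "N \<le> M"
  shows "(\<Sum>n. (c (n + M))\<^sup>2) \<le> (\<Sum>n. (c (n + N))\<^sup>2)"
proof -
  have "summable (\<lambda>n. (c (n + N))\<^sup>2)"
    using summable_ignore_initial_segment[OF assms(1)] .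
  from suminf_split_initial_segment[OF this, of "M - N"]
  have "(\<Sum>n. (c (n + N))\<^sup>2) = (\<Sum>n. (c (n + M))\<^sup>2) + (\<Sum>i<M - N. (c (i + N))\<^sup>2)"
    using assms(2) by (simp add: add.assoc)
  moreover have "(\<Sum>i<M - N. (c (i + N))\<^sup>2) \<ge> 0" by (intro sum_nonneg) simp
  ultimately show ?thesis by linarith
qed

definition normalized_tail :: "(nat \<Rightarrow> real) \<Rightarrow> nat \<Rightarrow> nat \<Rightarrow> real" where
  "normalized_tail c N k = c (k + N) / sqrt (\<Sum>n. (c (n + N))\<^sup>2)"

lemma summable_abs_normalized_tail:
  assumes "summable (\<lambda>n. \<bar>c n\<bar>)"
  shows "summable (\<lambda>k. \<bar>normalized_tail c N k\<bar>)"
  using summable_divide[OF summable_ignore_initial_segment[OF assms, of N], of "sqrt (\<Sum>n. (c (n + N))\<^sup>2)"]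
  by (simp add: normalized_tail_def abs_divide)

lemma suminf_normalized_tail_sq:
  assumes "summable (\<lambda>n. (c n)\<^sup>2)" "(\<Sum>n. (c (n + N))\<^sup>2) > 0"
  shows "(\<Sum>k. (normalized_tail c N k)\<^sup>2) = 1"
proof -
  have "(\<lambda>k. (normalized_tail c N k)\<^sup>2) = (\<lambda>k. (c (k + N))\<^sup>2 / (\<Sum>n. (c (n + N))\<^sup>2))"
    using assms(2) by (simp add: normalized_tail_def power_divide)
  then show ?thesis
    using suminf_divide[OF summable_ignore_initial_segment[OF assms(1), of N]] assms(2) by simp
qed

lemma normalized_tail_small:
  fixes c :: "nat \<Rightarrow> real"
  assumes sq: "summable (\<lambda>n. (c n)\<^sup>2)" and pos: "\<forall>N\<ge>1. (\<Sum>n. (c (n + N))\<^sup>2) > 0"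
    and ratio: "(\<lambda>N. (c N)\<^sup>2 / (\<Sum>n. (c (n + N))\<^sup>2)) \<longlonglongrightarrow> 0" and "e > 0"
  shows "eventually (\<lambda>N. \<forall>k. \<bar>normalized_tail c N k\<bar> \<le> e) sequentially"
proof -
  define s where "s N = (\<Sum>n. (c (n + N))\<^sup>2)" for N
  obtain N0 where N0: "\<forall>n\<ge>N0. \<bar>(c n)\<^sup>2 / s n\<bar> < e\<^sup>2"
    using LIMSEQ_D[OF ratio, of "e\<^sup>2"] \<open>e > 0\<close> by (auto simp: s_def)
  have "\<bar>normalized_tail c N k\<bar> \<le> e" if N: "N \<ge> max N0 1" for N k
  proof -
    have "s (k + N) > 0" "s N > 0" using pos N by (simp_all add: s_def)
    then have "(c (k + N))\<^sup>2 < e\<^sup>2 * s (k + N)"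
      using N0[rule_format, of "k + N"] N by (simp add: divide_less_eq)
    also have "\<dots> \<le> e\<^sup>2 * s N"
      unfolding s_def by (intro mult_left_mono suminf_sq_tail_antimono[OF sq]) auto
    finally have "(normalized_tail c N k)\<^sup>2 < e\<^sup>2"
      using \<open>s N > 0\<close> by (simp add: normalized_tail_def power_divide divide_less_eq s_def)
    then show ?thesis
      using \<open>e > 0\<close> abs_le_square_iff[of "normalized_tail c N k" e] by simp
  qed
  then show ?thesis unfolding eventually_sequentially by blast
qed

lemma suminf_tent_iter_minus_initial:
  fixes c :: "nat \<Rightarrow> real"
  assumes c: "summable (\<lambda>n. \<bar>c n\<bar>)" and N: "N \<ge> 1"
  shows "(\<Sum>n. c (n + 1) * tent_iter (n + 1) x) - (\<Sum>n\<in>{1..<N}. c n * tent_iter n x)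
    = (\<Sum>n. c (n + N) * tent (2 ^ n * (2 ^ (N - 1) * x)))"
proof -
  define a where "a n = c (n + 1) * tent (2 ^ n * x)" for n
  have "norm (a n) \<le> \<bar>c (n + 1)\<bar>" for n
    using tent_bounds[of "2 ^ n * x"] by (simp add: a_def abs_mult mult_left_le)
  then have "summable a"
    by (intro summable_comparison_test[OF _ summable_ignore_initial_segment[OF c, of 1]]) auto
  then have split: "suminf a = (\<Sum>n. a (n + (N - 1))) + (\<Sum>i<N - 1. a i)"
    by (rule suminf_split_initial_segment)
  have "(\<Sum>n. c (n + 1) * tent_iter (n + 1) x) = suminf a"
    by (simp add: a_def[abs_def] tent_iter_Suc)
  moreover have "(\<Sum>n\<in>{1..<N}. c n * tent_iter n x) = (\<Sum>i<N - 1. a i)"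
  proof -
    have "(\<Sum>n\<in>{1..<N}. c n * tent_iter n x) = (\<Sum>n\<in>{Suc 0..<Suc (N - 1)}. c n * tent_iter n x)"
      using N by simp
    also have "\<dots> = (\<Sum>i<N - 1. a i)"
      unfolding sum.shift_bounds_Suc_ivl by (simp add: a_def tent_iter_Suc atLeast0LessThan)
    finally show ?thesis .
  qed
  moreover have "(\<lambda>n. a (n + (N - 1))) = (\<lambda>n. c (n + N) * tent (2 ^ n * (2 ^ (N - 1) * x)))"
  proof
    fix n
    have "(2::real) ^ (n + (N - 1)) = 2 ^ n * 2 ^ (N - 1)" by (rule power_add)
    moreover have "n + (N - 1) + 1 = n + N" using N by simp
    ultimately show "a (n + (N - 1)) = c (n + N) * tent (2 ^ n * (2 ^ (N - 1) * x))"
      unfolding a_def by (simp only: mult.assoc)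
  qed
  ultimately show ?thesis using split by simp
qed

lemma suminf_tent_minus_half:
  fixes a :: "nat \<Rightarrow> real"
  assumes a: "summable (\<lambda>n. \<bar>a n\<bar>)"
  shows "(\<Sum>n. a n * tent (2 ^ n * y)) - (1/2) * (\<Sum>n. a n) = - (1/2) * (\<Sum>n. a n * rho (2 ^ n * y))"
proof -
  have "summable (\<lambda>n. a n * tent (2 ^ n * y))"
    using tent_bounds by (intro summable_comparison_test[OF _ a]) (auto simp: abs_mult intro!: mult_left_le)
  moreover have "summable (\<lambda>n. (1/2) * a n)"
    using summable_mult[OF summable_rabs_cancel[OF a]] .
  ultimately have "(\<Sum>n. a n * tent (2 ^ n * y)) - (\<Sum>n. (1/2) * a n)
      = (\<Sum>n. a n * tent (2 ^ n * y) - (1/2) * a n)"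
    by (rule suminf_diff)
  moreover have "(\<Sum>n. (1/2) * a n) = (1/2) * (\<Sum>n. a n)"
    by (rule suminf_mult[OF summable_rabs_cancel[OF a]])
  moreover have "(\<Sum>n. a n * tent (2 ^ n * y) - (1/2) * a n) = (\<Sum>n. - (1/2) * (a n * rho (2 ^ n * y)))"
    by (simp add: rho_def algebra_simps)
  moreover have "\<dots> = - (1/2) * (\<Sum>n. a n * rho (2 ^ n * y))"
    by (rule suminf_mult[OF summable_coeff_rho_pow2[OF a]])
  ultimately show ?thesis by linarith
qed

lemma statistic_eq_lacunary_sum:
  fixes c :: "nat \<Rightarrow> real"
  assumes c: "summable (\<lambda>n. \<bar>c n\<bar>)" and N: "N \<ge> 1" and pos: "(\<Sum>n. (c (n + N))\<^sup>2) > 0"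
  shows "((\<Sum>n. c (n + 1) * tent_iter (n + 1) x)
             - (\<Sum>n\<in>{1..<N}. c n * tent_iter n x)
             - (1/2) * (\<Sum>n. c (n + N)))
          / sqrt ((1/12) * (\<Sum>n. (c (n + N))\<^sup>2))
        = lacunary_sum (\<lambda>k. - normalized_tail c N k) (2 ^ (N - 1) * x)"
proof -
  define s where "s = (\<Sum>n. (c (n + N))\<^sup>2)"
  define y where "y = 2 ^ (N - 1) * x"
  have cN: "summable (\<lambda>n. \<bar>c (n + N)\<bar>)" using summable_ignore_initial_segment[OF c] .
  have num: "(\<Sum>n. c (n + 1) * tent_iter (n + 1) x) - (\<Sum>n\<in>{1..<N}. c n * tent_iter n x)
      - (1/2) * (\<Sum>n. c (n + N)) = - (1/2) * (\<Sum>n. c (n + N) * rho (2 ^ n * y))"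
    using suminf_tent_iter_minus_initial[OF c N, of x] suminf_tent_minus_half[OF cN, of y]
    by (simp add: y_def)
  have "sqrt (12::real) = 2 * sqrt 3" using real_sqrt_mult[of 4 3] by simp
  then have den: "sqrt ((1/12) * s) = sqrt s / (2 * sqrt 3)"
    by (simp add: real_sqrt_mult real_sqrt_divide)
  have "(\<lambda>k. - normalized_tail c N k * rho (2 ^ k * y)) = (\<lambda>k. c (k + N) * rho (2 ^ k * y) * (- 1 / sqrt s))"
    by (simp add: normalized_tail_def s_def fun_eq_iff)
  then have "(\<Sum>k. - normalized_tail c N k * rho (2 ^ k * y))
      = (\<Sum>k. c (k + N) * rho (2 ^ k * y)) * (- 1 / sqrt s)"
    by (simp only: suminf_mult2[OF summable_coeff_rho_pow2[OF cN]])
  then have "lacunary_sum (\<lambda>k. - normalized_tail c N k) y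
      = sqrt 3 * ((\<Sum>k. c (k + N) * rho (2 ^ k * y)) * (- 1 / sqrt s))"
    by (simp only: lacunary_sum_def)
  moreover have "sqrt s > 0" using pos by (simp add: s_def)
  ultimately show ?thesis
    unfolding num s_def[symmetric] y_def[symmetric] den by (simp add: field_simps)
qed

theorem theorem1p1:
  fixes c :: "nat \<Rightarrow> real"
  assumes abs_summable: "summable (\<lambda>n. \<bar>c n\<bar>)"
    and tail_pos: "\<forall>N\<ge>1. (\<Sum>n. (c (n + N))\<^sup>2) > 0"
    and ratio: "(\<lambda>N. (c N)\<^sup>2 / (\<Sum>n. (c (n + N))\<^sup>2)) \<longlonglongrightarrow> 0"
  shows "\<forall>u::real.
    (\<lambda>N. measure lebesgue
        {x \<in> {0..1::real}.
          ((\<Sum>n. c (n + 1) * tent_iter (n + 1) x)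
             - (\<Sum>n\<in>{1..<N}. c n * tent_iter n x)
             - (1/2) * (\<Sum>n. c (n + N)))
          / sqrt ((1/12) * (\<Sum>n. (c (n + N))\<^sup>2)) \<le> u})
    \<longlonglongrightarrow> (LBINT t:{..u}. exp (- (t\<^sup>2) / 2) / sqrt (2 * pi))"
proof -
  define b where "b = (\<lambda>N k. - normalized_tail c (Suc N) k)"
  have sq: "summable (\<lambda>n. (c n)\<^sup>2)" by (rule summable_square_if_summable_abs[OF abs_summable])
  have pos: "(\<Sum>n. (c (n + Suc N))\<^sup>2) > 0" for N using tail_pos[rule_format, of "Suc N"] by simp
  then have b: "summable (\<lambda>k. \<bar>b N k\<bar>)" "(\<Sum>k. (b N k)\<^sup>2) = 1" for N
    using summable_abs_normalized_tail[OF abs_summable] suminf_normalized_tail_sq[OF sq]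
    by (simp_all add: b_def)
  have "eventually (\<lambda>N. \<forall>k. \<bar>b N k\<bar> \<le> e) sequentially" if "e > 0" for e
    using normalized_tail_small[OF sq tail_pos ratio that]
      eventually_sequentially_Suc[of "\<lambda>N. \<forall>k. \<bar>normalized_tail c N k\<bar> \<le> e"]
    by (simp add: b_def)
  then have char: "(\<lambda>N. integral {0..1} (\<lambda>x. iexp (t * lacunary_sum (b N) (2 ^ N * x))))
      \<longlonglongrightarrow> complex_of_real (exp (- t\<^sup>2 / 2))" for t
    by (rule tendsto_char_lacunary_sum_gauss[where p="\<lambda>N. N", OF b])
  have cont: "continuous_on {0..1} (\<lambda>x. lacunary_sum (b N) (2 ^ N * x))" for N
    by (rule continuous_on_compose2[OF continuous_on_lacunary_sum[OF b(1)]]) (auto intro: continuous_intros)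
  have conv: "(\<lambda>N. measure lebesgue {x \<in> {0..1}. lacunary_sum (b N) (2 ^ N * x) \<le> u})
      \<longlonglongrightarrow> (LBINT t:{..u}. exp (- (t\<^sup>2) / 2) / sqrt (2 * pi))" for u
    by (rule tendsto_measure_le_std_normal_cdf[OF cont char])
  have stat: "lacunary_sum (b N) (2 ^ N * x)
      = ((\<Sum>n. c (n + 1) * tent_iter (n + 1) x) - (\<Sum>n\<in>{1..<Suc N}. c n * tent_iter n x)
          - (1/2) * (\<Sum>n. c (n + Suc N))) / sqrt ((1/12) * (\<Sum>n. (c (n + Suc N))\<^sup>2))" for N x
  proof -
    have "Suc N \<ge> 1" by simp
    from statistic_eq_lacunary_sum[OF abs_summable this pos, where x=x] show ?thesis
      by (simp only: b_def diff_Suc_1)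
  qed
  show ?thesis
    by (intro allI, rule LIMSEQ_imp_Suc) (use conv in \<open>simp only: stat[symmetric]\<close>)
qed

end
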